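(* Let $G=(V,E)$ be a strongly connected digraph and $s\in V$. Then every auxiliary graph $G_r$ (for $r$ the root of a subtree $T(r)$ that is not a leaf of $D(s)$) is strongly connected.
   Context: For a digraph $G=(V,E)$ and $s\in V$ with every vertex reachable from $s$: $u$ dominates $w$ in the flow graph $G(s)$ if every path from $s$ to $w$ contains $u$; the dominator tree $D(s)$ is the rooted tree on $V$ with root $s$ in which $u$ is an ancestor of $w$ iff $u$ dominates $w$; $d(w)$ is the parent of $w\neq s$. An edge $(u,w)$ is a bridge of $G(s)$ if every path from $s$ to $w$ contains it (then $u=d(w)$). A vertex $w\neq s$ is marked if $(d(w),w)$ is a bridge. Deleting from $D(s)$ all edges $(d(w),w)$ with $w$ marked decomposes $D(s)$ into subtrees rooted at $s$ or at marked vertices; $T(v)$ is the subtree containing $v$. A vertex $x\in T(r)$ is a boundary vertex of $T(r)$ if $x$ has a marked child in $D(s)$. Auxiliary graph: for a subtree root $r$ that is not a leaf of $D(s)$, $G_r=(V_r,E_r)$ has ordinary vertices $V_r^o$ = the vertices of $T(r)$ and auxiliary vertices $V_r^a$ consisting of: a copy of each marked child $z$ of each boundary vertex $x$ of $T(r)$ (with the edge $(x,z)$ in $E_r$), and, if $r\neq s$, a copy of $d(r)$ (with the edge $(d(r),r)$ in $E_r$). $E_r$ further contains all edges of $E$ with both endpoints in $T(r)$, plus the following shortcut edges, for each $(u,v)\in E$: (a) if $u\in T(r)$ and $v$ is not a descendant of $r$ in $D(s)$, the edge $(u,d(r))$; (b) if $v\in T(r)$ and $u$ is a descendant in $D(s)$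 of a marked child $z$ of a boundary vertex of $T(r)$, the edge $(z,v)$; (c) if $u$ is a descendant in $D(s)$ of a marked child $z$ of a boundary vertex of $T(r)$ and $v$ is not a descendant of $r$ in $D(s)$, the edge $(z,d(r))$. Parallel duplicate edges are not kept. *)

theory Defs
  imports Main
begin

fun walk :: "('a \<times> 'a) set \<Rightarrow> 'a list \<Rightarrow> bool" where
  "walk E [] = False"
| "walk E [x] = True"
| "walk E (x # y # xs) = ((x, y) \<in> E \<and> walk E (y # xs))"

definition path_from_to :: "('a \<times> 'a) set \<Rightarrow> 'a \<Rightarrow> 'a \<Rightarrow> 'a list \<Rightarrow> bool" where
  "path_from_to E x y p \<longleftrightarrow> walk E p \<and> hd p = x \<and> last p = y"

definition edges_of :: "'a list \<Rightarrow> ('a \<times> 'a) set" where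
  "edges_of p = set (zip p (tl p))"

definition strongly_connected :: "'v set \<Rightarrow> ('v \<times> 'v) set \<Rightarrow> bool" where
  "strongly_connected V E \<longleftrightarrow> (\<forall>x\<in>V. \<forall>y\<in>V. (x, y) \<in> E\<^sup>*)"

definition dominates :: "'a set \<Rightarrow> ('a \<times> 'a) set \<Rightarrow> 'a \<Rightarrow> 'a \<Rightarrow> 'a \<Rightarrow> bool" where
  "dominates V E s u w \<longleftrightarrow> u \<in> V \<and> w \<in> V \<and>
     (\<forall>p. path_from_to E s w p \<longrightarrow> u \<in> set p)"

definition idom :: "'a set \<Rightarrow> ('a \<times> 'a) set \<Rightarrow> 'a \<Rightarrow> 'a \<Rightarrow> 'a" where
  "idom V E s w = (THE u. dominates V E s u w \<and> u \<noteq> w \<and>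
      (\<forall>x. dominates V E s x w \<and> x \<noteq> w \<longrightarrow> dominates V E s x u))"

definition bridge :: "'a set \<Rightarrow> ('a \<times> 'a) set \<Rightarrow> 'a \<Rightarrow> 'a \<Rightarrow> 'a \<Rightarrow> bool" where
  "bridge V E s u w \<longleftrightarrow> (u, w) \<in> E \<and> w \<in> V \<and>
     (\<forall>p. path_from_to E s w p \<longrightarrow> (u, w) \<in> edges_of p)"

definition marked :: "'a set \<Rightarrow> ('a \<times> 'a) set \<Rightarrow> 'a \<Rightarrow> 'a \<Rightarrow> bool" where
  "marked V E s w \<longleftrightarrow> w \<in> V \<and> w \<noteq> s \<and> bridge V E s (idom V E s w) w"

text \<open>r is the root of one of the subtrees obtained from D(s) by deleting the edges
  (d(w),w) with w marked.\<close>
definition subtree_root :: "'a set \<Rightarrow> ('a \<times> 'a) set \<Rightarrow> 'a \<Rightarrow> 'a \<Rightarrow> bool" where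
  "subtree_root V E s r \<longleftrightarrow> r \<in> V \<and> (r = s \<or> marked V E s r)"

definition inT :: "'a set \<Rightarrow> ('a \<times> 'a) set \<Rightarrow> 'a \<Rightarrow> 'a \<Rightarrow> 'a \<Rightarrow> bool" where
  "inT V E s r v \<longleftrightarrow> subtree_root V E s r \<and> dominates V E s r v \<and>
     (\<forall>x. marked V E s x \<and> x \<noteq> r \<and> dominates V E s r x \<and> dominates V E s x v \<longrightarrow> False)"

definition marked_child_of_boundary :: "'a set \<Rightarrow> ('a \<times> 'a) set \<Rightarrow> 'a \<Rightarrow> 'a \<Rightarrow> 'a \<Rightarrow> bool" where
  "marked_child_of_boundary V E s r z \<longleftrightarrow> marked V E s z \<and> inT V E s r (idom V E s z)"

definition is_leaf :: "'a set \<Rightarrow> ('a \<times> 'a) set \<Rightarrow> 'a \<Rightarrow> 'a \<Rightarrow> bool" where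
  "is_leaf V E s r \<longleftrightarrow> \<not> (\<exists>w\<in>V. w \<noteq> s \<and> idom V E s w = r)"

text \<open>Auxiliary graph G_r: ordinary vertices are Inl v (v in T(r)), auxiliary vertices
  (copies) are Inr x.\<close>
definition aux_vertices :: "'a set \<Rightarrow> ('a \<times> 'a) set \<Rightarrow> 'a \<Rightarrow> 'a \<Rightarrow> ('a + 'a) set" where
  "aux_vertices V E s r =
     Inl ` {v. inT V E s r v}
     \<union> Inr ` {z. marked_child_of_boundary V E s r z}
     \<union> (if r \<noteq> s then {Inr (idom V E s r)} else {})"

definition aux_edges :: "'a set \<Rightarrow> ('a \<times> 'a) set \<Rightarrow> 'a \<Rightarrow> 'a \<Rightarrow> (('a + 'a) \<times> ('a + 'a)) set" where
  "aux_edges V E s r =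
     {(Inl (idom V E s z), Inr z) | z. marked_child_of_boundary V E s r z}
     \<union> (if r \<noteq> s then {(Inr (idom V E s r), Inl r)} else {})
     \<union> {(Inl u, Inl v) | u v. (u, v) \<in> E \<and> inT V E s r u \<and> inT V E s r v}
     \<union> {(Inl u, Inr (idom V E s r)) | u v. (u, v) \<in> E \<and> inT V E s r u
            \<and> \<not> dominates V E s r v}
     \<union> {(Inr z, Inl v) | z u v. (u, v) \<in> E \<and> inT V E s r v
            \<and> marked_child_of_boundary V E s r z \<and> dominates V E s z u}
     \<union> {(Inr z, Inr (idom V E s r)) | z u v. (u, v) \<in> E
            \<and> marked_child_of_boundary V E s r z \<and> dominates V E s z u
            \<and> \<not> dominates V E s r v}"

end

theory Submission
  imports Defs
begin

text \<open>
  Every vertex of G_r is linked to the ordinary vertex r in both directions.  To see this we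
  project the descendants of r in the dominator tree D(s) onto G_r: a vertex of T(r) goes to its
  ordinary copy, any other descendant w goes to the copy of the unique marked child z of a
  boundary vertex with z dominating w.  The projection turns every edge of G between descendants
  of r into a path of length at most one in G_r (the only edge entering the dominator subtree of
  a marked vertex z is its bridge (d(z), z)), and every edge leaving the descendants of r into an
  edge towards the copy of d(r).  Since r reaches all its descendants without leaving them, and
  every descendant either reaches r inside them or leaves them, reaching the copy of d(r) and then
  r, the theorem follows.
\<close>

definition avoid :: "('a \<times> 'a) set \<Rightarrow> 'a \<Rightarrow> ('a \<times> 'a) set" where
  "avoid F v = {(p, q). (p, q) \<in> F \<and> p \<noteq> v \<and> q \<noteq> v}"

definition no_exit :: "('a \<times> 'a) set \<Rightarrow> 'a \<Rightarrow> ('a \<times> 'a) set" where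
  "no_exit F v = {(p, q). (p, q) \<in> F \<and> p \<noteq> v}"

definition no_entry :: "('a \<times> 'a) set \<Rightarrow> 'a \<Rightarrow> ('a \<times> 'a) set" where
  "no_entry F v = {(p, q). (p, q) \<in> F \<and> q \<noteq> v}"

lemma rtrancl_weaken: "(a, b) \<in> R\<^sup>* \<Longrightarrow> R \<subseteq> S \<Longrightarrow> (a, b) \<in> S\<^sup>*"
  using rtrancl_mono by blast

lemma walk_Cons: "walk F (x # p) \<longleftrightarrow> (p = [] \<or> ((x, hd p) \<in> F \<and> walk F p))"
  by (cases p) auto

lemma walk_mono: "walk F p \<Longrightarrow> F \<subseteq> G \<Longrightarrow> walk G p"
  by (induction F p rule: walk.induct) auto

lemma walk_edges: "walk F p \<Longrightarrow> edges_of p \<subseteq> F"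
  by (induction F p rule: walk.induct) (auto simp: edges_of_def)

lemma walk_imp_rtrancl: "walk F p \<Longrightarrow> (hd p, last p) \<in> (F \<inter> set p \<times> set p)\<^sup>*"
proof (induction F p rule: walk.induct)
  case (3 F x y xs)
  have "(x, y) \<in> F \<inter> set (x # y # xs) \<times> set (x # y # xs)" using 3 by auto
  moreover have "(y, last (y # xs)) \<in> (F \<inter> set (y # xs) \<times> set (y # xs))\<^sup>*" using 3 by auto
  then have "(y, last (y # xs)) \<in> (F \<inter> set (x # y # xs) \<times> set (x # y # xs))\<^sup>*"
    by (rule rtrancl_weaken) auto
  ultimately have "(x, last (y # xs)) \<in> (F \<inter> set (x # y # xs) \<times> set (x # y # xs))\<^sup>*"
    by (rule converse_rtrancl_into_rtrancl)
  then show ?case by simp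
qed auto

lemma rtrancl_imp_walk:
  "(x, y) \<in> F\<^sup>* \<Longrightarrow> \<exists>p. walk F p \<and> hd p = x \<and> last p = y \<and> set p \<subseteq> insert x (Range F)"
proof (induction rule: converse_rtrancl_induct)
  case base
  show ?case by (rule exI[of _ "[y]"]) auto
next
  case (step x z)
  then obtain p where p: "walk F p" "hd p = z" "last p = y" "set p \<subseteq> insert z (Range F)"
    by blast
  have "p \<noteq> []" using p(1) by auto
  then have "walk F (x # p)" using p(1,2) step.hyps(1) by (simp add: walk_Cons)
  moreover have "set (x # p) \<subseteq> insert x (Range F)" using p(4) step.hyps(1) by auto
  ultimately show ?case using p(3) \<open>p \<noteq> []\<close> by (intro exI[of _ "x # p"]) auto
qed

lemma reach_avoiding_iff:
  assumes "x \<noteq> u"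
  shows "(x, y) \<in> (avoid F u)\<^sup>* \<longleftrightarrow> (\<exists>p. path_from_to F x y p \<and> u \<notin> set p)"
proof
  assume "(x, y) \<in> (avoid F u)\<^sup>*"
  from rtrancl_imp_walk[OF this] obtain p where p: "walk (avoid F u) p" "hd p = x" "last p = y"
    "set p \<subseteq> insert x (Range (avoid F u))"
    by blast
  have "walk F p" using p(1) by (rule walk_mono) (auto simp: avoid_def)
  moreover have "u \<notin> Range (avoid F u)" by (auto simp: avoid_def)
  then have "u \<notin> set p" using p(4) assms by blast
  ultimately show "\<exists>p. path_from_to F x y p \<and> u \<notin> set p"
    using p(2,3) unfolding path_from_to_def by blast
next
  assume "\<exists>p. path_from_to F x y p \<and> u \<notin> set p"
  then obtain p where p: "walk F p" "hd p = x" "last p = y" "u \<notin> set p"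
    by (auto simp: path_from_to_def)
  have "(x, y) \<in> (F \<inter> set p \<times> set p)\<^sup>*" using walk_imp_rtrancl[OF p(1)] p by simp
  moreover have "F \<inter> set p \<times> set p \<subseteq> avoid F u" using p(4) by (auto simp: avoid_def)
  ultimately show "(x, y) \<in> (avoid F u)\<^sup>*" by (rule rtrancl_weaken)
qed

text \<open>Cutting a walk at its first visit of v: either it never leaves v, or it reaches v without leaving it.\<close>
lemma stop_at_first_visit:
  "(a, w) \<in> F\<^sup>* \<Longrightarrow> (a, w) \<in> (no_exit F v)\<^sup>* \<or> (a, v) \<in> (no_exit F v)\<^sup>*"
proof (induction rule: rtrancl_induct)
  case (step c d)
  show ?case
  proof (cases "(a, v) \<in> (no_exit F v)\<^sup>*")
    case False
    then have "(a, c) \<in> (no_exit F v)\<^sup>*" and "c \<noteq> v" using step.IH by auto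
    then show ?thesis using step.hyps(2)
      by (auto simp: no_exit_def intro: rtrancl_into_rtrancl)
  qed simp
qed simp

lemma no_exit_converse: "no_exit (F\<inverse>) v = (no_entry F v)\<inverse>"
  by (auto simp: no_exit_def no_entry_def)

lemma start_at_last_visit:
  assumes "(a, w) \<in> F\<^sup>*"
  shows "(a, w) \<in> (no_entry F v)\<^sup>* \<or> (v, w) \<in> (no_entry F v)\<^sup>*"
proof -
  have "(w, a) \<in> (F\<inverse>)\<^sup>*" using assms by (simp add: rtrancl_converse)
  from stop_at_first_visit[OF this, of v] show ?thesis
    by (simp add: no_exit_converse rtrancl_converse)
qed

lemma no_exit_avoid:
  "(a, w) \<in> (no_exit F v)\<^sup>* \<Longrightarrow> w \<noteq> v \<Longrightarrow> (a, w) \<in> (avoid F v)\<^sup>*"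
proof (induction rule: rtrancl_induct)
  case (step c d)
  then show ?case by (auto simp: no_exit_def avoid_def intro: rtrancl_into_rtrancl)
qed simp

lemma avoid_converse: "avoid (F\<inverse>) v = (avoid F v)\<inverse>"
  by (auto simp: avoid_def)

lemma no_entry_avoid:
  assumes "(a, w) \<in> (no_entry F v)\<^sup>*" "a \<noteq> v"
  shows "(a, w) \<in> (avoid F v)\<^sup>*"
proof -
  have "(w, a) \<in> (no_exit (F\<inverse>) v)\<^sup>*"
    using assms(1) by (simp add: no_exit_converse rtrancl_converse)
  from no_exit_avoid[OF this assms(2)] show ?thesis
    by (simp add: avoid_converse rtrancl_converse)
qed

lemma avoid_target: "(a, w) \<in> (avoid F w)\<^sup>* \<Longrightarrow> a = w"
  by (erule rtranclE) (auto simp: avoid_def)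

lemma rtrancl_restrict_backward:
  assumes "(a, v) \<in> R\<^sup>*" "\<And>x. (x, v) \<in> R\<^sup>* \<Longrightarrow> x \<in> D"
  shows "(a, v) \<in> (R \<inter> D \<times> D)\<^sup>*"
  using assms(1)
proof (induction rule: converse_rtrancl_induct)
  case (step x y)
  have "(x, v) \<in> R\<^sup>*" using step.hyps by (rule converse_rtrancl_into_rtrancl)
  then have "x \<in> D" and "y \<in> D" using assms(2) step.hyps(2) by blast+
  then have "(x, y) \<in> R \<inter> D \<times> D" using step.hyps(1) by simp
  then show ?case using step.IH by (rule converse_rtrancl_into_rtrancl)
qed simp

lemma rtrancl_exit:
  assumes "(v, w) \<in> F\<^sup>*" "v \<in> D"
  shows "(v, w) \<in> (F \<inter> D \<times> D)\<^sup>* \<or>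
    (\<exists>a b. (v, a) \<in> (F \<inter> D \<times> D)\<^sup>* \<and> a \<in> D \<and> (a, b) \<in> F \<and> b \<notin> D)"
  using assms(1)
proof (induction rule: rtrancl_induct)
  case (step c d)
  show ?case
  proof (cases "(v, c) \<in> (F \<inter> D \<times> D)\<^sup>*")
    case True
    then have "c \<in> D" using assms(2) by (induction rule: rtrancl_induct) auto
    show ?thesis
    proof (cases "d \<in> D")
      case True
      then have "(c, d) \<in> F \<inter> D \<times> D" using \<open>c \<in> D\<close> step.hyps(2) by simp
      with \<open>(v, c) \<in> (F \<inter> D \<times> D)\<^sup>*\<close> show ?thesis by (simp add: rtrancl_into_rtrancl)
    next
      case False
      then show ?thesis using \<open>(v, c) \<in> (F \<inter> D \<times> D)\<^sup>*\<close> \<open>c \<in> D\<close> step.hyps(2) by blast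
    qed
  next
    case False
    then show ?thesis using step.IH by blast
  qed
qed simp

locale flow_graph =
  fixes V :: "'a set" and E :: "('a \<times> 'a) set" and s :: 'a
  assumes finite_V: "finite V" and E_V: "E \<subseteq> V \<times> V"
    and strongly_conn: "strongly_connected V E" and s_V: "s \<in> V"
begin

abbreviation dm :: "'a \<Rightarrow> 'a \<Rightarrow> bool" where "dm \<equiv> dominates V E s"
abbreviation dpar :: "'a \<Rightarrow> 'a" where "dpar \<equiv> idom V E s"

lemma reach: "x \<in> V \<Longrightarrow> y \<in> V \<Longrightarrow> (x, y) \<in> E\<^sup>*"
  using strongly_conn by (auto simp: strongly_connected_def)

lemma dom_iff:
  "dm u w \<longleftrightarrow> u \<in> V \<and> w \<in> V \<and> (u = s \<or> (s, w) \<notin> (avoid E u)\<^sup>*)"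
proof (cases "u = s")
  case True
  have "s \<in> set p" if "path_from_to E s w p" for p
    using that by (metis path_from_to_def hd_in_set walk.simps(1))
  then show ?thesis using True by (auto simp: dominates_def)
next
  case False
  have avoid_iff: "(s, w) \<in> (avoid E u)\<^sup>* \<longleftrightarrow> (\<exists>p. path_from_to E s w p \<and> u \<notin> set p)"
    using False by (intro reach_avoiding_iff) simp
  show ?thesis using False by (simp add: dominates_def avoid_iff)
qed

lemma dom_V: "dm u w \<Longrightarrow> u \<in> V \<and> w \<in> V"
  by (simp add: dom_iff)

lemma dom_refl: "w \<in> V \<Longrightarrow> dm w w"
  using avoid_target[of s w E] by (auto simp: dom_iff)

lemma dom_from_s: "w \<in> V \<Longrightarrow> dm s w"
  using s_V by (simp add: dom_iff)

lemma dom_to_s: "dm u s \<Longrightarrow> u = s"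
  by (auto simp: dom_iff)

text \<open>Dominance is transitive: a path avoiding u to w passes v, and its prefix reaches v avoiding u.\<close>
lemma dom_trans:
  assumes uv: "dm u v" and vw: "dm v w"
  shows "dm u w"
proof (rule ccontr)
  assume "\<not> dm u w"
  moreover have "u \<in> V" "w \<in> V" using uv vw dom_V by blast+
  ultimately have us: "u \<noteq> s" and sw: "(s, w) \<in> (avoid E u)\<^sup>*"
    by (simp_all add: dom_iff)
  have "v \<noteq> s" using uv us dom_to_s by blast
  have "w \<noteq> v" using uv \<open>\<not> dm u w\<close> by blast
  from stop_at_first_visit[OF sw, of v] show False
  proof
    assume "(s, w) \<in> (no_exit (avoid E u) v)\<^sup>*"
    then have "(s, w) \<in> (avoid (avoid E u) v)\<^sup>*" using \<open>w \<noteq> v\<close> by (rule no_exit_avoid)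
    then have "(s, w) \<in> (avoid E v)\<^sup>*"
      by (rule rtrancl_weaken) (auto simp: avoid_def)
    then show False using vw \<open>v \<noteq> s\<close> by (simp add: dom_iff)
  next
    assume "(s, v) \<in> (no_exit (avoid E u) v)\<^sup>*"
    then have "(s, v) \<in> (avoid E u)\<^sup>*"
      by (rule rtrancl_weaken) (auto simp: no_exit_def)
    then show False using uv us by (simp add: dom_iff)
  qed
qed

text \<open>Dominance is antisymmetric: cut a path from s to w at the first u, then at the first w.\<close>
lemma dom_antisym:
  assumes uw: "dm u w" and wu: "dm w u"
  shows "u = w"
proof (rule ccontr)
  assume "u \<noteq> w"
  then have "u \<noteq> s" "w \<noteq> s" using uw wu dom_to_s by blast+
  then have no_sw: "(s, w) \<notin> (avoid E u)\<^sup>*" and no_su: "(s, u) \<notin> (avoid E w)\<^sup>*"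
    using uw wu by (simp_all add: dom_iff)
  have "(s, w) \<in> E\<^sup>*" using reach s_V uw dom_V by blast
  from stop_at_first_visit[OF this, of u] have su: "(s, u) \<in> (no_exit E u)\<^sup>*"
  proof
    assume "(s, w) \<in> (no_exit E u)\<^sup>*"
    then have "(s, w) \<in> (avoid E u)\<^sup>*" using \<open>u \<noteq> w\<close> by (metis no_exit_avoid)
    then show ?thesis using no_sw by simp
  qed
  from stop_at_first_visit[OF su, of w] show False
  proof
    assume "(s, u) \<in> (no_exit (no_exit E u) w)\<^sup>*"
    then have "(s, u) \<in> (avoid (no_exit E u) w)\<^sup>*" using \<open>u \<noteq> w\<close> by (rule no_exit_avoid)
    then have "(s, u) \<in> (avoid E w)\<^sup>*"
      by (rule rtrancl_weaken) (auto simp: avoid_def no_exit_def)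
    then show False using no_su by simp
  next
    assume "(s, w) \<in> (no_exit (no_exit E u) w)\<^sup>*"
    then have "(s, w) \<in> (no_exit E u)\<^sup>*"
      by (rule rtrancl_weaken) (auto simp: no_exit_def)
    then have "(s, w) \<in> (avoid E u)\<^sup>*" using \<open>u \<noteq> w\<close> by (metis no_exit_avoid)
    then show False using no_sw by simp
  qed
qed

text \<open>The dominators of a vertex are linearly ordered, so dominance is the ancestor order of a tree.\<close>
lemma dom_linear:
  assumes xw: "dm x w" and yw: "dm y w"
  shows "dm x y \<or> dm y x"
proof (rule ccontr)
  assume neither: "\<not> (dm x y \<or> dm y x)"
  have V: "x \<in> V" "y \<in> V" "w \<in> V" using xw yw dom_V by auto
  then have "x \<noteq> y" using neither dom_refl by blast
  have "x \<noteq> s" "y \<noteq> s" using neither V dom_from_s by blast+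
  then have sy: "(s, y) \<in> (avoid E x)\<^sup>*" and sx: "(s, x) \<in> (avoid E y)\<^sup>*"
    using neither V by (simp_all add: dom_iff)
  have no_xw: "(s, w) \<notin> (avoid E x)\<^sup>*" and no_yw: "(s, w) \<notin> (avoid E y)\<^sup>*"
    using xw yw \<open>x \<noteq> s\<close> \<open>y \<noteq> s\<close> by (simp_all add: dom_iff)
  have "(y, w) \<in> E\<^sup>*" using reach V by blast
  then have y_w: "(y, w) \<in> (no_entry E y)\<^sup>*" using start_at_last_visit by metis
  from start_at_last_visit[OF y_w, of x] show False
  proof
    assume "(y, w) \<in> (no_entry (no_entry E y) x)\<^sup>*"
    then have "(y, w) \<in> (avoid (no_entry E y) x)\<^sup>*"
      using \<open>x \<noteq> y\<close> by (intro no_entry_avoid) auto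
    then have "(y, w) \<in> (avoid E x)\<^sup>*"
      by (rule rtrancl_weaken) (auto simp: avoid_def no_entry_def)
    then show False using sy no_xw by (meson rtrancl_trans)
  next
    assume "(x, w) \<in> (no_entry (no_entry E y) x)\<^sup>*"
    then have "(x, w) \<in> (no_entry E y)\<^sup>*"
      by (rule rtrancl_weaken) (auto simp: no_entry_def)
    then have "(x, w) \<in> (avoid E y)\<^sup>*" using \<open>x \<noteq> y\<close> by (rule no_entry_avoid)
    then show False using sx no_yw by (meson rtrancl_trans)
  qed
qed

abbreviation mk :: "'a \<Rightarrow> bool" where "mk \<equiv> marked V E s"

lemma bridge_unavoidable: "bridge V E s u w \<Longrightarrow> (s, w) \<notin> (E - {(u, w)})\<^sup>*"
proof
  assume b: "bridge V E s u w" and r: "(s, w) \<in> (E - {(u, w)})\<^sup>*"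
  from rtrancl_imp_walk[OF r] obtain p
    where p: "walk (E - {(u, w)}) p" "hd p = s" "last p = w" by blast
  have "walk E p" using p(1) by (rule walk_mono) auto
  then have "(u, w) \<in> edges_of p" using b p(2,3) by (auto simp: bridge_def path_from_to_def)
  then show False using walk_edges[OF p(1)] by auto
qed

lemma marked_bridge:
  assumes "mk z"
  shows "z \<noteq> s" "(dpar z, z) \<in> E" "z \<in> V" "dpar z \<in> V"
    and "(s, z) \<notin> (E - {(dpar z, z)})\<^sup>*"
proof -
  have b: "bridge V E s (dpar z) z" and "z \<noteq> s" using assms by (auto simp: marked_def)
  then show "z \<noteq> s" "(dpar z, z) \<in> E" by (auto simp: bridge_def)
  then show "z \<in> V" "dpar z \<in> V" using E_V by auto
  show "(s, z) \<notin> (E - {(dpar z, z)})\<^sup>*" using b by (rule bridge_unavoidable)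
qed

lemma marked_parent:
  assumes "mk z"
  shows "dm (dpar z) z" "dpar z \<noteq> z"
proof -
  note z = marked_bridge[OF assms]
  show "dpar z \<noteq> z"
  proof
    assume "dpar z = z"
    have "(s, z) \<in> (E - Id)\<^sup>*" using reach[OF s_V z(3)] by (simp add: rtrancl_r_diff_Id)
    then have "(s, z) \<in> (E - {(dpar z, z)})\<^sup>*"
      by (rule rtrancl_weaken) (use \<open>dpar z = z\<close> in blast)
    then show False using z(5) by simp
  qed
  have "(s, z) \<notin> (avoid E (dpar z))\<^sup>*"
  proof
    assume "(s, z) \<in> (avoid E (dpar z))\<^sup>*"
    then have "(s, z) \<in> (E - {(dpar z, z)})\<^sup>*" by (rule rtrancl_weaken) (auto simp: avoid_def)
    then show False using z(5) by simp
  qed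
  then show "dm (dpar z) z" using z(3,4) by (simp add: dom_iff)
qed

lemma strict_dom_marked:
  assumes "mk z" "dm x z" "x \<noteq> z"
  shows "dm x (dpar z)"
proof (rule ccontr)
  assume "\<not> dm x (dpar z)"
  moreover have "x \<in> V" "dpar z \<in> V" using assms dom_V marked_bridge by blast+
  ultimately have "x \<noteq> s" "(s, dpar z) \<in> (avoid E x)\<^sup>*" by (simp_all add: dom_iff)
  moreover have "dpar z \<noteq> x" using \<open>\<not> dm x (dpar z)\<close> dom_refl \<open>x \<in> V\<close> by blast
  then have "(dpar z, z) \<in> avoid E x"
    using marked_bridge(2)[OF assms(1)] assms(3) by (simp add: avoid_def)
  ultimately have "(s, z) \<in> (avoid E x)\<^sup>*" by (simp add: rtrancl_into_rtrancl)
  then show False using assms(2) \<open>x \<noteq> s\<close> by (simp add: dom_iff)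
qed

lemma marked_entry:
  assumes "mk z" "(a, b) \<in> E" "dm z b" "\<not> dm z a"
  shows "a = dpar z" "b = z"
proof -
  have "a \<in> V" "z \<in> V" using assms(2) E_V dom_V[OF assms(3)] by auto
  then have zs: "z \<noteq> s" and sa: "(s, a) \<in> (avoid E z)\<^sup>*"
    using assms(4) by (simp_all add: dom_iff)
  have "a \<noteq> z" using sa avoid_target[of s z E] zs by auto
  show "b = z"
  proof (rule ccontr)
    assume "b \<noteq> z"
    then have "(a, b) \<in> avoid E z" using assms(2) \<open>a \<noteq> z\<close> by (simp add: avoid_def)
    with sa have "(s, b) \<in> (avoid E z)\<^sup>*" by (rule rtrancl_into_rtrancl)
    then show False using assms(3) zs by (simp add: dom_iff)
  qed
  show "a = dpar z"
  proof (rule ccontr)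
    assume "a \<noteq> dpar z"
    have "(s, a) \<in> (E - {(dpar z, z)})\<^sup>*" using sa by (rule rtrancl_weaken) (auto simp: avoid_def)
    moreover have "(a, z) \<in> E - {(dpar z, z)}" using assms(2) \<open>b = z\<close> \<open>a \<noteq> dpar z\<close> by auto
    ultimately have "(s, z) \<in> (E - {(dpar z, z)})\<^sup>*" by (rule rtrancl_into_rtrancl)
    then show False using marked_bridge(5)[OF assms(1)] by simp
  qed
qed

abbreviation root :: "'a \<Rightarrow> bool" where "root \<equiv> subtree_root V E s"
abbreviation in_T :: "'a \<Rightarrow> 'a \<Rightarrow> bool" where "in_T \<equiv> inT V E s"
abbreviation bchild :: "'a \<Rightarrow> 'a \<Rightarrow> bool" where "bchild \<equiv> marked_child_of_boundary V E s"

lemma in_T_dom: "in_T r v \<Longrightarrow> dm r v"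
  by (simp add: inT_def)

lemma root_V: "root r \<Longrightarrow> r \<in> V"
  by (simp add: subtree_root_def)

lemma root_in_T: "root r \<Longrightarrow> in_T r r"
  using root_V dom_refl dom_antisym by (auto simp: inT_def)

lemma bchild_facts:
  assumes "bchild r z"
  shows "mk z" "in_T r (dpar z)" "dm r z" "z \<noteq> r"
proof -
  show z: "mk z" "in_T r (dpar z)" using assms by (simp_all add: marked_child_of_boundary_def)
  then have "dm r (dpar z)" using in_T_dom by blast
  then show "dm r z" using marked_parent(1)[OF z(1)] by (rule dom_trans)
  show "z \<noteq> r"
  proof
    assume "z = r"
    then have "dm z (dpar z)" using \<open>dm r (dpar z)\<close> by simp
    then have "dpar z = z" by (rule dom_antisym[OF marked_parent(1)[OF z(1)]])
    then show False using marked_parent(2)[OF z(1)] by simp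
  qed
qed

lemma bchild_below_not_in_T:
  assumes "bchild r z" "dm z w"
  shows "\<not> in_T r w"
  using bchild_facts[OF assms(1)] assms(2) by (auto simp: inT_def)

text \<open>A descendant of r outside T(r) lies below some marked child of a boundary vertex: take the marked vertex on its dominator chain closest to r.\<close>
lemma bchild_exists:
  assumes "root r" "dm r w" "\<not> in_T r w"
  shows "\<exists>z. bchild r z \<and> dm z w"
proof -
  let ?P = "\<lambda>x. mk x \<and> x \<noteq> r \<and> dm r x \<and> dm x w"
  let ?depth = "\<lambda>x. card {y. dm y x}"
  have "\<exists>x. ?P x" using assms by (auto simp: inT_def)
  then obtain z where z: "?P z" and z_min: "\<And>y. ?P y \<Longrightarrow> ?depth z \<le> ?depth y"
    using ex_has_least_nat[of ?P _ ?depth] by metis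
  have "bchild r z" unfolding marked_child_of_boundary_def inT_def
  proof (intro conjI allI impI)
    show "mk z" "root r" using z assms(1) by simp_all
    show "dm r (dpar z)" using strict_dom_marked z by blast
    fix y assume y: "mk y \<and> y \<noteq> r \<and> dm r y \<and> dm y (dpar z)"
    have yz: "dm y z" using y marked_parent(1)[of z] z by (blast intro: dom_trans)
    have "y \<noteq> z" using y marked_parent[of z] z dom_antisym by metis
    have "{x. dm x y} \<subset> {x. dm x z}"
    proof
      show "{x. dm x y} \<subseteq> {x. dm x z}" using yz dom_trans by blast
      have "z \<notin> {x. dm x y}" using yz \<open>y \<noteq> z\<close> dom_antisym by blast
      moreover have "z \<in> {x. dm x z}" using z dom_V dom_refl by blast
      ultimately show "{x. dm x y} \<noteq> {x. dm x z}" by blast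
    qed
    moreover have "finite {x. dm x z}" using finite_V dom_V by (auto intro: finite_subset)
    ultimately have "?depth y < ?depth z" by (rule psubset_card_mono[rotated])
    moreover have "?P y" using y yz z dom_trans by blast
    ultimately show False using z_min by fastforce
  qed
  then show ?thesis using z by blast
qed

text \<open>That child is unique, since no two of them are comparable in D(s).\<close>
lemma bchild_unique:
  assumes "bchild r z" "bchild r z'" "dm z w" "dm z' w"
  shows "z = z'"
proof -
  have no_nesting: "False" if "bchild r a" "bchild r b" "a \<noteq> b" "dm a b" for a b
  proof -
    have "dm a (dpar b)" using strict_dom_marked bchild_facts(1)[OF that(2)] that(3,4) by blast
    then show False using bchild_below_not_in_T[OF that(1)] bchild_facts(2)[OF that(2)] by blast
  qed
  show ?thesis using dom_linear[OF assms(3,4)] no_nesting assms(1,2) by blast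
qed

definition proj :: "'a \<Rightarrow> 'a \<Rightarrow> 'a + 'a" where
  "proj r w = (if in_T r w then Inl w else Inr (SOME z. bchild r z \<and> dm z w))"

lemma proj_in_T: "in_T r w \<Longrightarrow> proj r w = Inl w"
  by (simp add: proj_def)

lemma proj_below:
  assumes "bchild r z" "dm z w"
  shows "proj r w = Inr z"
proof -
  have "bchild r (SOME z. bchild r z \<and> dm z w) \<and> dm (SOME z. bchild r z \<and> dm z w) w"
    using assms by (rule someI[where x = z, OF conjI])
  then have "(SOME z. bchild r z \<and> dm z w) = z" using bchild_unique assms by blast
  then show ?thesis using bchild_below_not_in_T[OF assms] by (simp add: proj_def)
qed

lemma proj_cases:
  assumes "root r" "dm r w"
  obtains "in_T r w" "proj r w = Inl w"
  | z where "bchild r z" "dm z w" "\<not> in_T r w" "proj r w = Inr z"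
proof (cases "in_T r w")
  case True
  then show ?thesis using that(1) proj_in_T by blast
next
  case False
  then obtain z where "bchild r z" "dm z w" using bchild_exists assms by blast
  then show ?thesis using that(2) False proj_below by blast
qed

abbreviation Er :: "'a \<Rightarrow> ('a + 'a) rel" where "Er \<equiv> aux_edges V E s"

lemma edge_proj:
  assumes r: "root r" and ab: "(a, b) \<in> E" and "dm r a" "dm r b"
  shows "(proj r a, proj r b) \<in> (Er r)\<^sup>*"
proof (cases rule: proj_cases[OF r \<open>dm r a\<close>]; cases rule: proj_cases[OF r \<open>dm r b\<close>])
  assume "in_T r a" "proj r a = Inl a" "in_T r b" "proj r b = Inl b"
  then have "(proj r a, proj r b) \<in> Er r" using ab by (auto simp: aux_edges_def)
  then show ?thesis by simp
next
  fix z assume a: "in_T r a" "proj r a = Inl a" and b: "bchild r z" "dm z b" "proj r b = Inr z"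
  have "\<not> dm z a" using bchild_below_not_in_T[OF b(1)] a(1) by blast
  then have "a = dpar z" "b = z" using marked_entry bchild_facts(1)[OF b(1)] ab b(2) by blast+
  then have "(proj r a, proj r b) \<in> Er r" using a b by (auto simp: aux_edges_def)
  then show ?thesis by simp
next
  fix z assume a: "bchild r z" "dm z a" "proj r a = Inr z" and b: "in_T r b" "proj r b = Inl b"
  have "(proj r a, proj r b) \<in> Er r" using a b ab unfolding aux_edges_def by blast
  then show ?thesis by simp
next
  fix z z' assume a: "bchild r z" "dm z a" "\<not> in_T r a" "proj r a = Inr z"
    and b: "bchild r z'" "dm z' b" "proj r b = Inr z'"
  show ?thesis
  proof (cases "dm z b")
    case True
    then have "z = z'" using bchild_unique a b by blast
    then show ?thesis using a b by simp
  next
    case False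
    have "\<not> dm z' a"
    proof
      assume "dm z' a"
      then have "z = z'" using bchild_unique a b by blast
      then show False using False b by simp
    qed
    then have "a = dpar z'" using marked_entry bchild_facts(1)[OF b(1)] ab b(2) by blast
    then show ?thesis using bchild_facts(2)[OF b(1)] a(3) by simp
  qed
qed

lemma exit_proj:
  assumes r: "root r" and ab: "(a, b) \<in> E" and "dm r a" "\<not> dm r b"
  shows "(proj r a, Inr (dpar r)) \<in> Er r"
proof (cases rule: proj_cases[OF r \<open>dm r a\<close>])
  case 1
  then show ?thesis using assms unfolding aux_edges_def by blast
next
  case 2
  then show ?thesis using assms unfolding aux_edges_def by blast
qed

lemma path_proj:
  assumes r: "root r" and "(x, y) \<in> (E \<inter> {v. dm r v} \<times> {v. dm r v})\<^sup>*"
  shows "(proj r x, proj r y) \<in> (Er r)\<^sup>*"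
  using assms(2)
proof (induction rule: rtrancl_induct)
  case (step c d)
  then have "(proj r c, proj r d) \<in> (Er r)\<^sup>*" using edge_proj[OF r] by blast
  with step.IH show ?case by (rule rtrancl_trans)
qed simp

text \<open>r reaches each of its descendants v without leaving its descendants: after the last visit of r, a path from s to v stays below r.\<close>
lemma reach_within_dominated:
  assumes "dm r v"
  shows "(r, v) \<in> (E \<inter> {x. dm r x} \<times> {x. dm r x})\<^sup>*"
proof -
  let ?R = "no_entry E r"
  have V: "r \<in> V" "v \<in> V" using dom_V[OF assms] by auto
  have dominated: "dm r x" if x: "(x, v) \<in> ?R\<^sup>*" for x
  proof (rule ccontr)
    assume "\<not> dm r x"
    have "x \<in> V" using x V(2) E_V by (induction rule: converse_rtrancl_induct) (auto simp: no_entry_def)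
    have "x \<noteq> r" using \<open>\<not> dm r x\<close> V(1) dom_refl by blast
    have "r \<noteq> s" "(s, x) \<in> (avoid E r)\<^sup>*"
      using \<open>\<not> dm r x\<close> V(1) \<open>x \<in> V\<close> by (simp_all add: dom_iff)
    moreover have "(x, v) \<in> (avoid E r)\<^sup>*" using x \<open>x \<noteq> r\<close> by (rule no_entry_avoid)
    ultimately have "(s, v) \<in> (avoid E r)\<^sup>*" by (meson rtrancl_trans)
    then show False using assms \<open>r \<noteq> s\<close> by (simp add: dom_iff)
  qed
  have "(r, v) \<in> ?R\<^sup>*"
    using start_at_last_visit[OF reach[OF s_V V(2)], of r] dominated dom_to_s by blast
  then have "(r, v) \<in> (?R \<inter> {x. dm r x} \<times> {x. dm r x})\<^sup>*"
    by (rule rtrancl_restrict_backward) (simp add: dominated)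
  then show ?thesis by (rule rtrancl_weaken) (auto simp: no_entry_def)
qed

lemma proj_root: "root r \<Longrightarrow> proj r r = Inl r"
  by (simp add: proj_in_T root_in_T)

lemma root_reaches_proj:
  assumes "root r" "dm r w"
  shows "(Inl r, proj r w) \<in> (Er r)\<^sup>*"
  using path_proj[OF assms(1) reach_within_dominated[OF assms(2)]] proj_root[OF assms(1)] by simp

text \<open>If r is not s, every descendant leaves the dominator subtree of r on its way to s, so its image reaches the copy of d(r).\<close>
lemma proj_reaches_parent_copy:
  assumes r: "root r" and "r \<noteq> s" and w: "dm r w"
  shows "(proj r w, Inr (dpar r)) \<in> (Er r)\<^sup>*"
proof -
  let ?D = "{x. dm r x}"
  have "(w, s) \<in> E\<^sup>*" using reach s_V dom_V[OF w] by blast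
  moreover have "w \<in> ?D" using w by simp
  ultimately have "(w, s) \<in> (E \<inter> ?D \<times> ?D)\<^sup>* \<or>
    (\<exists>a b. (w, a) \<in> (E \<inter> ?D \<times> ?D)\<^sup>* \<and> a \<in> ?D \<and> (a, b) \<in> E \<and> b \<notin> ?D)"
    by (rule rtrancl_exit)
  then show ?thesis
  proof (elim disjE exE conjE)
    assume "(w, s) \<in> (E \<inter> ?D \<times> ?D)\<^sup>*"
    then have "dm r s" using w by (cases rule: rtranclE) auto
    then show ?thesis using \<open>r \<noteq> s\<close> dom_to_s by blast
  next
    fix a b assume a: "(w, a) \<in> (E \<inter> ?D \<times> ?D)\<^sup>*" "a \<in> ?D" "(a, b) \<in> E" "b \<notin> ?D"
    have "(proj r w, proj r a) \<in> (Er r)\<^sup>*" using path_proj[OF r a(1)] .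
    moreover have "(proj r a, Inr (dpar r)) \<in> Er r" using exit_proj[OF r a(3)] a(2,4) by simp
    ultimately show ?thesis by (rule rtrancl_into_rtrancl)
  qed
qed

text \<open>The image of every descendant reaches r: directly if r = s, otherwise via the copy of d(r).\<close>
lemma proj_reaches_root:
  assumes r: "root r" and w: "dm r w"
  shows "(proj r w, Inl r) \<in> (Er r)\<^sup>*"
proof (cases "r = s")
  case True
  have "E \<inter> {x. dm r x} \<times> {x. dm r x} = E" using True E_V dom_from_s by auto
  then have "(w, r) \<in> (E \<inter> {x. dm r x} \<times> {x. dm r x})\<^sup>*"
    using reach dom_V[OF w] by simp
  from path_proj[OF r this] show ?thesis using proj_root[OF r] by simp
next
  case False
  then have "(Inr (dpar r), Inl r) \<in> Er r" by (simp add: aux_edges_def)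
  with proj_reaches_parent_copy[OF r False w] show ?thesis by (rule rtrancl_into_rtrancl)
qed

lemma aux_vertex_cases:
  assumes "x \<in> aux_vertices V E s r"
  obtains w where "dm r w" "x = proj r w" | "r \<noteq> s" "x = Inr (dpar r)"
proof -
  consider (ordinary) v where "in_T r v" "x = Inl v"
    | (child) z where "bchild r z" "x = Inr z"
    | (parent) "r \<noteq> s" "x = Inr (dpar r)"
    using assms by (auto simp: aux_vertices_def split: if_splits)
  then show ?thesis
  proof cases
    case ordinary
    then show ?thesis using that(1) in_T_dom proj_in_T by metis
  next
    case child
    have "dm z z" using bchild_facts(1)[OF child(1)] marked_bridge(3) dom_refl by blast
    then have "proj r z = Inr z" using child(1) proj_below by blast
    then show ?thesis using that(1) bchild_facts(3)[OF child(1)] child(2) by metis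
  next
    case parent
    then show ?thesis using that(2) by blast
  qed
qed

theorem aux_graph_strongly_connected:
  assumes r: "root r"
  shows "strongly_connected (aux_vertices V E s r) (Er r)"
proof -
  have hub: "(Inl r, x) \<in> (Er r)\<^sup>* \<and> (x, Inl r) \<in> (Er r)\<^sup>*"
    if "x \<in> aux_vertices V E s r" for x
    using that
  proof (cases rule: aux_vertex_cases)
    case (1 w)
    then show ?thesis using root_reaches_proj[OF r] proj_reaches_root[OF r] by simp
  next
    case 2
    then have "(Inr (dpar r), Inl r) \<in> Er r" by (simp add: aux_edges_def)
    moreover have "(Inl r, Inr (dpar r)) \<in> (Er r)\<^sup>*"
      using proj_reaches_parent_copy[OF r \<open>r \<noteq> s\<close> dom_refl[OF root_V[OF r]]] proj_root[OF r]
      by simp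
    ultimately show ?thesis using 2 by simp
  qed
  show ?thesis unfolding strongly_connected_def using hub by (meson rtrancl_trans)
qed

end

text \<open>The main theorem.\<close>
theorem mainTheorem9:
  fixes V :: "'a set" and E :: "('a \<times> 'a) set" and s r :: 'a
  assumes "finite V" and "E \<subseteq> V \<times> V"
    and "strongly_connected V E"
    and "s \<in> V"
    and "subtree_root V E s r"
    and "\<not> is_leaf V E s r"
  shows "strongly_connected (aux_vertices V E s r) (aux_edges V E s r)"
proof -
  interpret flow_graph V E s using assms(1-4) by unfold_locales
  show ?thesis using assms(5) by (rule aux_graph_strongly_connected)
qed

end
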